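(* Let $D$ be a strongly connected digraph containing at least one cycle, with girth $g$. Let $k$ and $p$ be integers with $k\ge g-1\ge p\ge 1$, and put $\hat k=\lceil k/p\rceil\, p$. If $D$ contains no cycle whose length is congruent to $r$ modulo $\hat k$ for any $r\in\{-p+2,-p+3,\ldots,0,\ldots,p\}$, then $\chi_A(D)\le \lceil k/p\rceil$.
   Context: Digraphs are finite and loopless; paths and cycles are directed. The girth of a digraph is the length of a shortest directed cycle. A set of vertices is acyclic if the subdigraph it induces contains no directed cycle. The dichromatic number $\chi_A(D)$ is the minimum $k$ such that $V(D)$ can be colored with $k$ colors so that every color class is acyclic. A digraph is strongly connected if for every ordered pair of distinct vertices $u,v$ there is a directed $uv$-path. *)

theory Defs
  imports Complex_Main "HOL-Number_Theory.Cong"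
begin

definition digraph :: "'a set \<Rightarrow> ('a \<times> 'a) set \<Rightarrow> bool" where
  "digraph V E \<longleftrightarrow> finite V \<and> E \<subseteq> V \<times> V \<and> (\<forall>v. (v, v) \<notin> E)"

definition is_cycle :: "('a \<times> 'a) set \<Rightarrow> 'a list \<Rightarrow> bool" where
  "is_cycle E c \<longleftrightarrow> c \<noteq> [] \<and> distinct c \<and>
     (\<forall>i < length c. (c ! i, c ! ((i + 1) mod length c)) \<in> E)"

definition girth :: "('a \<times> 'a) set \<Rightarrow> nat" where
  "girth E = (LEAST l. \<exists>c. is_cycle E c \<and> length c = l)"

definition acyclic_set :: "('a \<times> 'a) set \<Rightarrow> 'a set \<Rightarrow> bool" where
  "acyclic_set E S \<longleftrightarrow> \<not> (\<exists>c. is_cycle E c \<and> set c \<subseteq> S)"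

definition dichromatic_number :: "'a set \<Rightarrow> ('a \<times> 'a) set \<Rightarrow> nat" where
  "dichromatic_number V E = (LEAST k. \<exists>f :: 'a \<Rightarrow> nat.
      (\<forall>v \<in> V. f v < k) \<and> (\<forall>i < k. acyclic_set E {v \<in> V. f v = i}))"

definition strongly_connected :: "'a set \<Rightarrow> ('a \<times> 'a) set \<Rightarrow> bool" where
  "strongly_connected V E \<longleftrightarrow> (\<forall>u \<in> V. \<forall>v \<in> V. u \<noteq> v \<longrightarrow> (u, v) \<in> E\<^sup>+)"

end

theory Submission
  imports Defs
begin

(* Label the vertices by their depth d in a depth-first search forest. Every directed cycle contains
   a back arc u \<rightarrow> v, and the tree path from v to u together with this arc is a cycle of length
   d u - d v + 1. Colour v by \<lfloor>d v / p\<rfloor> mod \<lceil>k/p\<rceil>. If a cycle were monochromatic, the length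
   d u - d v + 1 of the cycle closed by its back arc would be congruent modulo \<lceil>k/p\<rceil> p to a number
   in [-p + 2, p], which is excluded. *)

definition has_path :: "('a \<times> 'a) set \<Rightarrow> 'a set \<Rightarrow> 'a \<Rightarrow> 'a \<Rightarrow> nat \<Rightarrow> bool" where
  "has_path E S a b n \<longleftrightarrow> (\<exists>ps. ps \<noteq> [] \<and> distinct ps \<and> hd ps = a \<and> last ps = b \<and>
     set ps \<subseteq> S \<and> length ps = Suc n \<and> (\<forall>i. Suc i < length ps \<longrightarrow> (ps ! i, ps ! Suc i) \<in> E))"

definition cycle_arcs :: "'a list \<Rightarrow> ('a \<times> 'a) set" where
  "cycle_arcs c = {(c ! i, c ! ((i + 1) mod length c)) | i. i < length c}"

definition out_closed :: "('a \<times> 'a) set \<Rightarrow> 'a set \<Rightarrow> 'a set \<Rightarrow> bool" where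
  "out_closed E U R \<longleftrightarrow> (\<forall>v\<in>R. \<forall>w\<in>U. (v, w) \<in> E \<longrightarrow> w \<in> R)"

(* The only property of DFS depths that the colouring uses: every cycle in S has an arc (u, v)
   behaving like a back arc. *)
definition back_arc_labelling :: "('a \<times> 'a) set \<Rightarrow> 'a set \<Rightarrow> ('a \<Rightarrow> nat) \<Rightarrow> bool" where
  "back_arc_labelling E S d \<longleftrightarrow> (\<forall>c. is_cycle E c \<and> set c \<subseteq> S \<longrightarrow>
     (\<exists>(u, v)\<in>cycle_arcs c. \<exists>c'. is_cycle E c' \<and> int (length c') = int (d u) - int (d v) + 1))"

lemma has_path_refl: "x \<in> S \<Longrightarrow> has_path E S x x 0"
  unfolding has_path_def by (intro exI[of _ "[x]"]) auto

lemma has_path_mono: "has_path E S a b n \<Longrightarrow> S \<subseteq> T \<Longrightarrow> has_path E T a b n"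
  unfolding has_path_def by blast

lemma has_path_Cons:
  assumes "has_path E S y v n" "x \<notin> S" "(x, y) \<in> E"
  shows "has_path E (insert x S) x v (Suc n)"
proof -
  obtain ps where ps: "ps \<noteq> []" "distinct ps" "hd ps = y" "last ps = v" "set ps \<subseteq> S"
    "length ps = Suc n" and arcs: "\<forall>i. Suc i < length ps \<longrightarrow> (ps ! i, ps ! Suc i) \<in> E"
    using assms(1) unfolding has_path_def by blast
  have "\<forall>i. Suc i < length (x # ps) \<longrightarrow> ((x # ps) ! i, (x # ps) ! Suc i) \<in> E"
  proof (intro allI impI)
    fix i assume "Suc i < length (x # ps)"
    then show "((x # ps) ! i, (x # ps) ! Suc i) \<in> E"
      using arcs ps assms(3) by (cases i) (auto simp: hd_conv_nth)
  qed
  with ps assms(2) show ?thesis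
    unfolding has_path_def by (intro exI[of _ "x # ps"]) auto
qed

lemma has_path_close_cycle:
  assumes "has_path E S a b n" "(b, a) \<in> E"
  shows "\<exists>c. is_cycle E c \<and> length c = Suc n"
proof -
  obtain ps where ps: "ps \<noteq> []" "distinct ps" "hd ps = a" "last ps = b" "length ps = Suc n"
    and arcs: "\<forall>i. Suc i < length ps \<longrightarrow> (ps ! i, ps ! Suc i) \<in> E"
    using assms(1) unfolding has_path_def by blast
  have "(ps ! i, ps ! ((i + 1) mod length ps)) \<in> E" if i: "i < length ps" for i
  proof (cases "Suc i < length ps")
    case True
    then show ?thesis using arcs by simp
  next
    case False
    with i ps have "i = n" by simp
    with ps assms(2) show ?thesis by (simp add: last_conv_nth hd_conv_nth)
  qed
  with ps show ?thesis unfolding is_cycle_def by blast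
qed

lemma cycle_arcs_subset: "cycle_arcs c \<subseteq> set c \<times> set c"
  unfolding cycle_arcs_def
  by (auto intro!: nth_mem) (metis bot_nat_0.extremum_strict mod_less_divisor neq0_conv)

lemma cycle_arcs_subset_arcs: "is_cycle E c \<Longrightarrow> cycle_arcs c \<subseteq> E"
  unfolding cycle_arcs_def is_cycle_def by blast

lemma cycle_arc_into:
  assumes "x \<in> set c"
  obtains u where "(u, x) \<in> cycle_arcs c"
proof -
  obtain j where j: "j < length c" "c ! j = x" using assms by (auto simp: in_set_conv_nth)
  define i where "i = (if j = 0 then length c - 1 else j - 1)"
  have "i < length c" "(i + 1) mod length c = j"
    unfolding i_def using j(1) by auto
  with j(2) have "(c ! i, x) \<in> cycle_arcs c" unfolding cycle_arcs_def by force
  then show ?thesis by (rule that)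
qed

lemma cycle_within_out_closed:
  assumes c: "is_cycle E c" and "set c \<subseteq> U" and "out_closed E U R" and "set c \<inter> R \<noteq> {}"
  shows "set c \<subseteq> R"
proof -
  let ?l = "length c"
  obtain j where j: "j < ?l" "c ! j \<in> R" using assms(4) by (auto simp: in_set_conv_nth)
  then have l0: "0 < ?l" by linarith
  have R: "c ! ((j + m) mod ?l) \<in> R" for m
  proof (induction m)
    case 0
    then show ?case using j by simp
  next
    case (Suc m)
    let ?i = "(j + m) mod ?l"
    have "?i < ?l" using l0 by simp
    then have "(c ! ?i, c ! ((j + Suc m) mod ?l)) \<in> E"
      using c unfolding is_cycle_def by (metis add_Suc_right mod_Suc_eq Suc_eq_plus1)
    moreover have "c ! ((j + Suc m) mod ?l) \<in> U"
      using assms(2) l0 by (meson nth_mem mod_less_divisor subsetD)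
    ultimately show ?case using Suc assms(3) unfolding out_closed_def by blast
  qed
  show ?thesis
  proof
    fix v assume "v \<in> set c"
    then obtain t where t: "t < ?l" "c ! t = v" by (auto simp: in_set_conv_nth)
    then have "(j + (t + ?l - j)) mod ?l = t" using j(1) by simp
    then show "v \<in> R" using R[of "t + ?l - j"] t(2) by simp
  qed
qed

lemma back_arc_labelling_mono:
  "back_arc_labelling E S d \<Longrightarrow> T \<subseteq> S \<Longrightarrow> back_arc_labelling E T d"
  unfolding back_arc_labelling_def by blast

lemma back_arc_labelling_shift:
  assumes "back_arc_labelling E S d" "\<forall>v\<in>S. int (d' v) = int (d v) + a"
  shows "back_arc_labelling E S d'"
  unfolding back_arc_labelling_def
proof (intro allI impI)
  fix c assume c: "is_cycle E c \<and> set c \<subseteq> S"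
  then obtain u v c' where "(u, v) \<in> cycle_arcs c" "is_cycle E c'"
    "int (length c') = int (d u) - int (d v) + 1"
    using assms(1) unfolding back_arc_labelling_def by blast
  moreover have "u \<in> S" "v \<in> S" using calculation(1) c cycle_arcs_subset by blast+
  ultimately have "(u, v) \<in> cycle_arcs c" "is_cycle E c'"
    "int (length c') = int (d' u) - int (d' v) + 1"
    using assms(2) by auto
  then show "\<exists>(u, v)\<in>cycle_arcs c. \<exists>c'. is_cycle E c' \<and>
      int (length c') = int (d' u) - int (d' v) + 1"
    by blast
qed

lemma back_arc_labelling_Un:
  assumes "back_arc_labelling E R1 d" "back_arc_labelling E R2 d" "out_closed E (R1 \<union> R2) R1"
  shows "back_arc_labelling E (R1 \<union> R2) d"
  unfolding back_arc_labelling_def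
proof (intro allI impI)
  fix c assume c: "is_cycle E c \<and> set c \<subseteq> R1 \<union> R2"
  then have "set c \<subseteq> R1 \<or> set c \<subseteq> R2"
    using cycle_within_out_closed[OF _ _ assms(3)] by blast
  then show "\<exists>(u, v)\<in>cycle_arcs c. \<exists>c'. is_cycle E c' \<and>
      int (length c') = int (d u) - int (d v) + 1"
    using assms(1,2) c unfolding back_arc_labelling_def by blast
qed

lemma back_arc_labelling_insert_root:
  assumes "\<forall>v\<in>S. has_path E S x v (d v)" "d x = 0" "back_arc_labelling E (S - {x}) d"
  shows "back_arc_labelling E S d"
  unfolding back_arc_labelling_def
proof (intro allI impI)
  fix c assume c: "is_cycle E c \<and> set c \<subseteq> S"
  show "\<exists>(u, v)\<in>cycle_arcs c. \<exists>c'. is_cycle E c' \<and>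
      int (length c') = int (d u) - int (d v) + 1"
  proof (cases "x \<in> set c")
    case True
    then obtain u where u: "(u, x) \<in> cycle_arcs c" by (rule cycle_arc_into)
    then have "u \<in> S" and ux: "(u, x) \<in> E"
      using c cycle_arcs_subset cycle_arcs_subset_arcs by blast+
    with assms(1) have "has_path E S x u (d u)" by blast
    then obtain c' where "is_cycle E c'" "length c' = Suc (d u)"
      using has_path_close_cycle[OF _ ux] by blast
    then have "is_cycle E c'" "int (length c') = int (d u) - int (d x) + 1"
      using assms(2) by simp_all
    with u show ?thesis by blast
  next
    case False
    with c have "set c \<subseteq> S - {x}" by blast
    with c assms(3) show ?thesis unfolding back_arc_labelling_def by blast
  qed
qed

(* R is the part of U explored by a depth-first search from the roots Y, and d is the depth. *)
definition explored_from ::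
    "('a \<times> 'a) set \<Rightarrow> 'a set \<Rightarrow> 'a set \<Rightarrow> 'a set \<Rightarrow> ('a \<Rightarrow> nat) \<Rightarrow> bool" where
  "explored_from E U Y R d \<longleftrightarrow> R \<subseteq> U \<and> out_closed E U R \<and>
     (\<forall>v\<in>R. \<exists>y\<in>Y. has_path E R y v (d v)) \<and> back_arc_labelling E R d"

lemma explored_from_mono: "explored_from E U Y R d \<Longrightarrow> Y \<subseteq> Y' \<Longrightarrow> explored_from E U Y' R d"
  unfolding explored_from_def by blast

lemma explored_from_insert_root:
  fixes E :: "('a \<times> 'a) set" and U :: "'a set" and x :: 'a and d :: "'a \<Rightarrow> nat"
  defines "N \<equiv> {y \<in> U - {x}. (x, y) \<in> E}" and "d' \<equiv> \<lambda>v. if v = x then 0 else Suc (d v)"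
  assumes "x \<in> U" "N \<subseteq> R" "explored_from E (U - {x}) N R d"
  shows "explored_from E U {x} (insert x R) d'"
proof -
  have R: "R \<subseteq> U - {x}" "out_closed E (U - {x}) R" "\<forall>v\<in>R. \<exists>y\<in>N. has_path E R y v (d v)"
    "back_arc_labelling E R d"
    using assms(5) unfolding explored_from_def by blast+
  then have "x \<notin> R" by blast
  have root_paths: "has_path E (insert x R) x v (d' v)" if v: "v \<in> insert x R" for v
  proof (cases "v = x")
    case True
    then show ?thesis by (simp add: d'_def has_path_refl)
  next
    case False
    with v R(3) obtain y where "(x, y) \<in> E" "has_path E R y v (d v)" unfolding N_def by blast
    with False \<open>x \<notin> R\<close> show ?thesis by (simp add: d'_def has_path_Cons)
  qed
  have "back_arc_labelling E R d'"
    by (rule back_arc_labelling_shift[OF R(4), of _ 1]) (use \<open>x \<notin> R\<close> in \<open>auto simp: d'_def\<close>)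
  then have "back_arc_labelling E (insert x R - {x}) d'"
    using \<open>x \<notin> R\<close> by simp
  with root_paths have "back_arc_labelling E (insert x R) d'"
    using back_arc_labelling_insert_root[of "insert x R" E x d'] by (simp add: d'_def)
  moreover have "out_closed E U (insert x R)"
    using R(2) assms(4) unfolding out_closed_def N_def by blast
  ultimately show ?thesis
    using R(1) assms(3) root_paths unfolding explored_from_def by blast
qed

lemma explored_from_Un:
  fixes R1 :: "'a set" and d1 d2 :: "'a \<Rightarrow> nat"
  defines "d \<equiv> \<lambda>v. if v \<in> R1 then d1 v else d2 v"
  assumes R1: "explored_from E U Y1 R1 d1" and R2: "explored_from E (U - R1) Y2 R2 d2"
  shows "explored_from E U (Y1 \<union> Y2) (R1 \<union> R2) d"
proof -
  have R1': "R1 \<subseteq> U" "out_closed E U R1" "\<forall>v\<in>R1. \<exists>y\<in>Y1. has_path E R1 y v (d1 v)"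
    "back_arc_labelling E R1 d1"
    using R1 unfolding explored_from_def by blast+
  have R2': "R2 \<subseteq> U - R1" "out_closed E (U - R1) R2" "\<forall>v\<in>R2. \<exists>y\<in>Y2. has_path E R2 y v (d2 v)"
    "back_arc_labelling E R2 d2"
    using R2 unfolding explored_from_def by blast+
  have "\<exists>y\<in>Y1 \<union> Y2. has_path E (R1 \<union> R2) y v (d v)" if v: "v \<in> R1 \<union> R2" for v
  proof (cases "v \<in> R1")
    case True
    with R1'(3) obtain y where "y \<in> Y1" "has_path E R1 y v (d v)" by (auto simp: d_def)
    then show ?thesis by (blast intro: has_path_mono)
  next
    case False
    with v R2'(3) obtain y where "y \<in> Y2" "has_path E R2 y v (d v)" by (auto simp: d_def)
    then show ?thesis by (blast intro: has_path_mono)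
  qed
  moreover have "back_arc_labelling E (R1 \<union> R2) d"
  proof (rule back_arc_labelling_Un)
    show "back_arc_labelling E R1 d"
      by (rule back_arc_labelling_shift[OF R1'(4), of _ 0]) (simp add: d_def)
    have "R1 \<inter> R2 = {}" using R2'(1) by blast
    then have "\<forall>v\<in>R2. int (d v) = int (d2 v) + 0" by (auto simp: d_def)
    then show "back_arc_labelling E R2 d"
      by (rule back_arc_labelling_shift[OF R2'(4)])
    show "out_closed E (R1 \<union> R2) R1"
      using R1'(2) R2'(1) unfolding out_closed_def by blast
  qed
  moreover have "R1 \<union> R2 \<subseteq> U" "out_closed E U (R1 \<union> R2)"
    using R1'(1,2) R2'(1,2) unfolding out_closed_def by blast+
  ultimately show ?thesis unfolding explored_from_def by blast
qed

lemma exists_explored_from: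
  assumes "finite U" "Y \<subseteq> U"
  shows "\<exists>R d. Y \<subseteq> R \<and> explored_from E U Y R d"
  using assms
proof (induction U arbitrary: Y rule: finite_psubset_induct)
  case (psubset U)
  show ?case
  proof (cases "Y = {}")
    case True
    have "explored_from E U {} {} d" for d
      unfolding explored_from_def out_closed_def back_arc_labelling_def is_cycle_def by auto
    with True show ?thesis by blast
  next
    case False
    then obtain x where x: "x \<in> Y" by blast
    define N where "N = {y \<in> U - {x}. (x, y) \<in> E}"
    have "U - {x} \<subset> U" "N \<subseteq> U - {x}" using x psubset.prems unfolding N_def by blast+
    then obtain R' d' where "N \<subseteq> R'" "explored_from E (U - {x}) N R' d'"
      using psubset.IH[of "U - {x}" N] by blast
    then have R1: "explored_from E U {x} (insert x R') (\<lambda>v. if v = x then 0 else Suc (d' v))"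
      (is "explored_from E U {x} ?R1 ?d1")
      using x psubset.prems unfolding N_def by (intro explored_from_insert_root) blast+
    have "U - ?R1 \<subset> U" "Y - ?R1 \<subseteq> U - ?R1" using x psubset.prems by blast+
    then obtain R2 d2 where R2: "Y - ?R1 \<subseteq> R2" "explored_from E (U - ?R1) (Y - ?R1) R2 d2"
      using psubset.IH[of "U - ?R1" "Y - ?R1"] by blast
    have "explored_from E U Y (?R1 \<union> R2) (\<lambda>v. if v \<in> ?R1 then ?d1 v else d2 v)"
      by (rule explored_from_mono[OF explored_from_Un[OF R1 R2(2)]]) (use x in blast)
    moreover have "Y \<subseteq> ?R1 \<union> R2" using R2(1) by blast
    ultimately show ?thesis by blast
  qed
qed

lemma back_arc_labelling_exists:
  assumes "finite V"
  obtains d where "back_arc_labelling E V d"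
proof -
  obtain R d where "V \<subseteq> R" "explored_from E V V R d"
    using exists_explored_from[OF assms order_refl, of E] by blast
  then have "R = V" "back_arc_labelling E R d" unfolding explored_from_def by blast+
  then show ?thesis using that by blast
qed

lemma cong_diff_add_one_of_cong_div:
  fixes x y p K :: int
  assumes "p > 0" "[x div p = y div p] (mod K)"
  shows "\<exists>r. - p + 2 \<le> r \<and> r \<le> p \<and> [x - y + 1 = r] (mod K * p)"
proof (intro exI conjI)
  let ?r = "x mod p - y mod p + 1"
  show "- p + 2 \<le> ?r" "?r \<le> p"
    using pos_mod_bound[OF assms(1), of x] pos_mod_bound[OF assms(1), of y]
      pos_mod_sign[OF assms(1), of x] pos_mod_sign[OF assms(1), of y] by linarith+
  have "x - y + 1 - ?r = (x div p - y div p) * p"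
    by (simp add: algebra_simps minus_mod_eq_mult_div)
  moreover have "K dvd (x div p - y div p)"
    using assms(2) by (simp add: cong_iff_dvd_diff)
  ultimately show "[x - y + 1 = ?r] (mod K * p)"
    by (simp add: cong_iff_dvd_diff)
qed

lemma acyclic_set_of_cong_blocks:
  fixes p K :: int
  assumes "back_arc_labelling E S d" "p > 0"
    and "\<forall>u\<in>S. \<forall>v\<in>S. [int (d u) div p = int (d v) div p] (mod K)"
    and "\<forall>c. is_cycle E c \<longrightarrow> \<not> (\<exists>r. - p + 2 \<le> r \<and> r \<le> p \<and> [int (length c) = r] (mod K * p))"
  shows "acyclic_set E S"
  unfolding acyclic_set_def
proof
  assume "\<exists>c. is_cycle E c \<and> set c \<subseteq> S"
  then obtain c u v c' where c: "is_cycle E c" "set c \<subseteq> S" and uv: "(u, v) \<in> cycle_arcs c"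
    and c': "is_cycle E c'" "int (length c') = int (d u) - int (d v) + 1"
    using assms(1) unfolding back_arc_labelling_def by blast
  have "u \<in> S" "v \<in> S" using uv c(2) cycle_arcs_subset by blast+
  then have "\<exists>r. - p + 2 \<le> r \<and> r \<le> p \<and> [int (length c') = r] (mod K * p)"
    unfolding c'(2) using assms(2,3) by (blast intro: cong_diff_add_one_of_cong_div)
  with c'(1) assms(4) show False by blast
qed

lemma dichromatic_number_le:
  assumes "\<forall>v\<in>V. f v < k" "\<forall>i<k. acyclic_set E {v \<in> V. f v = i}"
  shows "dichromatic_number V E \<le> k"
  unfolding dichromatic_number_def by (rule Least_le) (use assms in blast)

theorem theorem2:
  fixes V :: "'a set" and E :: "('a \<times> 'a) set" and k p :: int
  assumes "digraph V E"
    and "strongly_connected V E"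
    and "\<exists>c. is_cycle E c"
    and "k \<ge> int (girth E) - 1" and "int (girth E) - 1 \<ge> p" and "p \<ge> 1"
    and "\<forall>c. is_cycle E c \<longrightarrow>
           \<not> (\<exists>r::int. - p + 2 \<le> r \<and> r \<le> p \<and>
                 [int (length c) = r] (mod (\<lceil>of_int k / of_int p :: real\<rceil> * p)))"
  shows "int (dichromatic_number V E) \<le> \<lceil>of_int k / of_int p :: real\<rceil>"
proof -
  define K where "K = \<lceil>of_int k / of_int p :: real\<rceil>"
  have "(1::real) \<le> of_int k / of_int p" using assms(4-6) by (simp add: divide_simps)
  then have K: "K \<ge> 1" unfolding K_def by linarith
  obtain d where d: "back_arc_labelling E V d"
    using assms(1) back_arc_labelling_exists unfolding digraph_def by blast
  define f where "f v = nat (int (d v) div p mod K)" for v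
  have "f v < nat K" for v using K by (simp add: f_def)
  moreover have "acyclic_set E {v \<in> V. f v = i}" for i
  proof (rule acyclic_set_of_cong_blocks)
    show "back_arc_labelling E {v \<in> V. f v = i} d"
      using d by (rule back_arc_labelling_mono) blast
    show "\<forall>u\<in>{v \<in> V. f v = i}. \<forall>v\<in>{v \<in> V. f v = i}. [int (d u) div p = int (d v) div p] (mod K)"
      using K by (auto simp: f_def cong_def eq_nat_nat_iff)
  qed (use assms(6,7) in \<open>simp_all add: K_def\<close>)
  ultimately have "dichromatic_number V E \<le> nat K" by (blast intro: dichromatic_number_le)
  then show ?thesis using K unfolding K_def by linarith
qed

end
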